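(* Let $r, s, m, n$ be positive integers, let $f: V(H_{n,m}) \rightarrow \{-r,s\}$ be a function, and let $q = \frac{1}{n} f(V(H_{n,m}))$. Then $H_{n,m}$ can be decomposed into $n$ vertex-disjoint directed $m$-paths $P_1, P_2, \ldots, P_n$ such that \[\lambda(q,r,s,m) \le f(V(P_i)) \le \Lambda(q,r,s,m)\] for all $1 \le i \le n$.
   Context: For a set $Y$ of vertices, $f(Y)=\sum_{y\in Y}f(y)$. For positive integers $n,m$, $H_{n,m}$ is the directed graph whose vertex set is the disjoint union of $V_1,\dots,V_m$ with $|V_i|=n$, and whose arc set is $\bigcup_{i=1}^{m-1}\{(v,w): v\in V_i, w\in V_{i+1}\}$. A directed $m$-path is a directed path with $m$ vertices. $L(r,s,m)=\{-rx+sy : x,y\in\mathbb{Z}, x,y\ge 0, x+y=m\}$, and for real $q\in[-rm,sm]$, $\lambda(q,r,s,m)=\max\{p\in L(r,s,m): p\le q\}$ and $\Lambda(q,r,s,m)=\min\{p\in L(r,s,m): p\ge q\}$. *)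

theory Defs
  imports Complex_Main
begin

text \<open>The digraph H(n,m). A vertex is a pair (i, a): layer i (0-based, i < m)
  and position a within the layer (a < n). So V_{i+1} of the paper is layer i.\<close>

definition H_verts :: "nat \<Rightarrow> nat \<Rightarrow> (nat \<times> nat) set" where
  "H_verts n m = {0..<m} \<times> {0..<n}"

definition H_arc :: "nat \<Rightarrow> nat \<Rightarrow> nat \<times> nat \<Rightarrow> nat \<times> nat \<Rightarrow> bool" where
  "H_arc n m v w \<longleftrightarrow> v \<in> H_verts n m \<and> w \<in> H_verts n m \<and> fst w = Suc (fst v)"

definition is_dipath :: "'v set \<Rightarrow> ('v \<Rightarrow> 'v \<Rightarrow> bool) \<Rightarrow> nat \<Rightarrow> 'v list \<Rightarrow> bool" where
  "is_dipath V A k P \<longleftrightarrow> length P = k \<and> distinct P \<and> set P \<subseteq> V \<and>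
     (\<forall>j. Suc j < length P \<longrightarrow> A (P ! j) (P ! Suc j))"

definition Lset :: "nat \<Rightarrow> nat \<Rightarrow> nat \<Rightarrow> real set" where
  "Lset r s m = {- real r * real x + real s * real y | x y. x + y = m}"

definition lam :: "real \<Rightarrow> nat \<Rightarrow> nat \<Rightarrow> nat \<Rightarrow> real" where
  "lam q r s m = Max {p \<in> Lset r s m. p \<le> q}"

definition Lam :: "real \<Rightarrow> nat \<Rightarrow> nat \<Rightarrow> nat \<Rightarrow> real" where
  "Lam q r s m = Min {p \<in> Lset r s m. q \<le> p}"

end

theory Submission
  imports Defs
begin

text \<open>Number the weight-\<open>s\<close> vertices layer by layer as tokens \<open>0, \<dots>, T - 1\<close>
  and give token \<open>u\<close> to path \<open>u mod n\<close>, completing each layer with its weight-\<open>(-r)\<close>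
  vertices. A layer has at most \<open>n\<close> tokens, and they are consecutive, so no path gets
  two of them: every path takes exactly one vertex per layer and the paths partition
  \<open>H\<^sub>n\<^sub>,\<^sub>m\<close>. Path \<open>i\<close> then receives \<open>c \<in> {\<lfloor>T/n\<rfloor>, \<lceil>T/n\<rceil>}\<close> tokens, so its weight
  is \<open>(r+s)c - rm\<close>. Since \<open>q = (r+s)T/n - rm\<close> and
  \<open>L(r,s,m) = {(r+s)y - rm | 0 \<le> y \<le> m}\<close>, the weights \<open>(r+s)\<lfloor>T/n\<rfloor> - rm\<close> and
  \<open>(r+s)\<lceil>T/n\<rceil> - rm\<close> are exactly \<open>\<lambda>(q,r,s,m)\<close> and \<open>\<Lambda>(q,r,s,m)\<close>.\<close>

text \<open>The number of \<open>u < t\<close> with \<open>u mod n = i\<close>.\<close>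

definition cyclic_share :: "nat \<Rightarrow> nat \<Rightarrow> nat \<Rightarrow> nat" where
  "cyclic_share n t i = t div n + (if i < t mod n then 1 else 0)"

text \<open>\<open>(i - t) mod n\<close>: if tokens \<open>t, t + 1, \<dots>\<close> are dealt to positions \<open>0, 1, \<dots>\<close>
  of a layer, path \<open>i\<close> gets the token at this position.\<close>

definition cyclic_offset :: "nat \<Rightarrow> nat \<Rightarrow> nat \<Rightarrow> nat" where
  "cyclic_offset n t i = (i + n - t mod n) mod n"

lemma cyclic_offset_eq:
  assumes "i < n"
  shows "cyclic_offset n t i = (if t mod n \<le> i then i - t mod n else i + n - t mod n)"
proof (cases "t mod n \<le> i")
  case True
  have "i + n - t mod n = (i - t mod n) + n" using True by simp
  then have "cyclic_offset n t i = ((i - t mod n) + n) mod n"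
    unfolding cyclic_offset_def by (simp only:)
  also have "\<dots> = i - t mod n" using assms by simp
  finally show ?thesis using True by simp
next
  case False
  then show ?thesis using assms by (simp add: cyclic_offset_def)
qed

lemma bij_betw_cyclic_offset:
  assumes "n > 0"
  shows "bij_betw (cyclic_offset n t) {..<n} {..<n}"
proof -
  have "inj_on (cyclic_offset n t) {..<n}"
  proof (rule inj_onI)
    fix i j assume "i \<in> {..<n}" "j \<in> {..<n}" "cyclic_offset n t i = cyclic_offset n t j"
    moreover have "t mod n < n" using assms by simp
    ultimately show "i = j" by (simp add: cyclic_offset_eq split: if_splits; linarith)
  qed
  moreover have "cyclic_offset n t ` {..<n} \<subseteq> {..<n}"
    using assms by (auto simp: cyclic_offset_def)
  ultimately show ?thesis
    by (simp add: bij_betw_def endo_inj_surj)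
qed

lemma cyclic_share_add:
  assumes "k \<le> n" "i < n"
  shows "cyclic_share n (t + k) i = cyclic_share n t i + (if cyclic_offset n t i < k then 1 else 0)"
proof -
  define a where "a = t mod n"
  define b where "b = t div n"
  have n: "n \<noteq> 0" and a: "a < n" using assms by (auto simp: a_def)
  have t: "t = a + b * n" by (simp add: a_def b_def)
  show ?thesis
  proof (cases "a + k < n")
    case True
    have "(t + k) div n = b" "(t + k) mod n = a + k"
      using True n by (simp_all add: t add.commute[of _ k] add.assoc[symmetric])
    then show ?thesis using True assms unfolding cyclic_share_def
      by (auto simp: cyclic_offset_eq a_def[symmetric] b_def[symmetric])
  next
    case False
    have e: "t + k = (a + k - n) + (b + 1) * n" using t False by simp
    have "a + k - n < n" using a assms by simp
    moreover have "(t + k) div n = (b + 1) + (a + k - n) div n"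
      unfolding e using n by (rule div_mult_self1)
    moreover have "(t + k) mod n = (a + k - n) mod n"
      unfolding e by (rule mod_mult_self1)
    ultimately have "(t + k) div n = b + 1" "(t + k) mod n = a + k - n"
      by simp_all
    then show ?thesis using False a assms unfolding cyclic_share_def
      by (auto simp: cyclic_offset_eq a_def[symmetric] b_def[symmetric])
  qed
qed

lemma floor_le_cyclic_share:
  "\<lfloor>real t / real n\<rfloor> \<le> int (cyclic_share n t i)"
  unfolding cyclic_share_def by (simp add: floor_divide_of_nat_eq)

lemma cyclic_share_le_ceiling:
  assumes "n > 0"
  shows "int (cyclic_share n t i) \<le> \<lceil>real t / real n\<rceil>"
proof (cases "i < t mod n")
  case True
  have "t div n * n < t" using True div_mult_mod_eq[of t n] by linarith
  then have "real (t div n) * real n < real t"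
    using of_nat_less_iff[of "t div n * n" t, where 'a = real] by simp
  then have "real (t div n) < real t / real n" using assms by (simp add: field_simps)
  then have "int (t div n) < \<lceil>real t / real n\<rceil>" by (simp add: less_ceiling_iff)
  then show ?thesis using True by (simp add: cyclic_share_def)
next
  case False
  then show ?thesis
    using floor_le_ceiling[of "real t / real n"] by (simp add: cyclic_share_def floor_divide_of_nat_eq)
qed

lemma sum_cyclic_offset_indicator:
  fixes k :: "nat \<Rightarrow> nat"
  assumes "\<forall>l<L. k l \<le> n" "i < n"
  shows "(\<Sum>l<L. if cyclic_offset n (\<Sum>j<l. k j) i < k l then 1 else 0)
         = cyclic_share n (\<Sum>l<L. k l) i"
  using assms
proof (induction L)
  case 0
  then show ?case by (simp add: cyclic_share_def)
next
  case (Suc L)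
  then show ?case by (simp add: cyclic_share_add)
qed

lemma Lset_eq_image: "Lset r s m = (\<lambda>y. real (r + s) * real y - real r * real m) ` {..m}"
proof (rule set_eqI, rule iffI)
  fix p assume "p \<in> Lset r s m"
  then obtain x y where "x + y = m" "p = - real r * real x + real s * real y"
    unfolding Lset_def by blast
  then show "p \<in> (\<lambda>y. real (r + s) * real y - real r * real m) ` {..m}"
    by (intro image_eqI[of _ _ y]) (auto simp: algebra_simps)
next
  fix p assume "p \<in> (\<lambda>y. real (r + s) * real y - real r * real m) ` {..m}"
  then obtain y where "y \<le> m" "p = real (r + s) * real y - real r * real m" by auto
  then show "p \<in> Lset r s m"
    unfolding Lset_def
    by (intro CollectI exI[of _ "m - y"] exI[of _ y]) (auto simp: algebra_simps of_nat_diff)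
qed

lemma lam_eq_floor:
  assumes "r + s > 0" "0 \<le> x" "x \<le> real m"
  shows "lam (real (r + s) * x - real r * real m) r s m
         = real (r + s) * of_int \<lfloor>x\<rfloor> - real r * real m"
proof -
  define w where "w y = real (r + s) * y - real r * real m" for y :: real
  have "real (r + s) > 0" using assms(1) of_nat_0_less_iff by blast
  then have w_le: "w y \<le> w z \<longleftrightarrow> y \<le> z" for y z
    using mult_le_cancel_left_pos[of "real (r + s)" y z] unfolding w_def by linarith
  have L: "Lset r s m = (\<lambda>y. w (real y)) ` {..m}"
    unfolding w_def by (rule Lset_eq_image)
  have fl: "of_int \<lfloor>x\<rfloor> = real (nat \<lfloor>x\<rfloor>)" "nat \<lfloor>x\<rfloor> \<le> m"
    using assms by (auto simp: nat_le_iff floor_le_iff)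
  have "Max {p \<in> Lset r s m. p \<le> w x} = w (of_int \<lfloor>x\<rfloor>)"
  proof (rule Max_eqI)
    show "finite {p \<in> Lset r s m. p \<le> w x}" unfolding L by simp
    show "w (of_int \<lfloor>x\<rfloor>) \<in> {p \<in> Lset r s m. p \<le> w x}"
      using imageI[of "nat \<lfloor>x\<rfloor>" "{..m}" "\<lambda>y. w (real y)"] fl(2) by (simp add: L w_le flip: fl(1))
    fix p assume "p \<in> {p \<in> Lset r s m. p \<le> w x}"
    then obtain y :: nat where "p = w (real y)" "real y \<le> x" unfolding L by (auto simp: w_le)
    then show "p \<le> w (of_int \<lfloor>x\<rfloor>)"
      using le_floor_iff[of "int y" x] by (simp add: w_le)
  qed
  then show ?thesis unfolding lam_def w_def .
qed

lemma Lam_eq_ceiling: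
  assumes "r + s > 0" "0 \<le> x" "x \<le> real m"
  shows "Lam (real (r + s) * x - real r * real m) r s m
         = real (r + s) * of_int \<lceil>x\<rceil> - real r * real m"
proof -
  define w where "w y = real (r + s) * y - real r * real m" for y :: real
  have "real (r + s) > 0" using assms(1) of_nat_0_less_iff by blast
  then have w_le: "w y \<le> w z \<longleftrightarrow> y \<le> z" for y z
    using mult_le_cancel_left_pos[of "real (r + s)" y z] unfolding w_def by linarith
  have L: "Lset r s m = (\<lambda>y. w (real y)) ` {..m}"
    unfolding w_def by (rule Lset_eq_image)
  have cl: "of_int \<lceil>x\<rceil> = real (nat \<lceil>x\<rceil>)" "nat \<lceil>x\<rceil> \<le> m"
    using assms by (auto simp: nat_le_iff ceiling_le_iff)
  have "Min {p \<in> Lset r s m. w x \<le> p} = w (of_int \<lceil>x\<rceil>)"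
  proof (rule Min_eqI)
    show "finite {p \<in> Lset r s m. w x \<le> p}" unfolding L by simp
    show "w (of_int \<lceil>x\<rceil>) \<in> {p \<in> Lset r s m. w x \<le> p}"
      using imageI[of "nat \<lceil>x\<rceil>" "{..m}" "\<lambda>y. w (real y)"] cl(2) by (simp add: L w_le flip: cl(1))
    fix p assume "p \<in> {p \<in> Lset r s m. w x \<le> p}"
    then obtain y :: nat where "p = w (real y)" "x \<le> real y" unfolding L by (auto simp: w_le)
    then show "w (of_int \<lceil>x\<rceil>) \<le> p"
      using ceiling_le_iff[of x "int y"] by (simp add: w_le)
  qed
  then show ?thesis unfolding Lam_def w_def .
qed

lemma cyclic_share_weight_bounds:
  assumes "r + s > 0" "n > 0" "t \<le> n * m"
  defines "q \<equiv> real (r + s) * (real t / real n) - real r * real m"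
  shows "lam q r s m \<le> real (r + s) * real (cyclic_share n t i) - real r * real m"
    and "real (r + s) * real (cyclic_share n t i) - real r * real m \<le> Lam q r s m"
proof -
  have "real t / real n \<le> real m"
    using assms(2,3) by (simp add: field_simps flip: of_nat_mult)
  then have lam_q: "lam q r s m = real (r + s) * of_int \<lfloor>real t / real n\<rfloor> - real r * real m"
    and Lam_q: "Lam q r s m = real (r + s) * of_int \<lceil>real t / real n\<rceil> - real r * real m"
    unfolding q_def using assms(1) by (intro lam_eq_floor Lam_eq_ceiling; simp)+
  have "of_int \<lfloor>real t / real n\<rfloor> \<le> real (cyclic_share n t i)"
    using floor_le_cyclic_share[of t n i] by (metis of_int_le_iff of_int_of_nat_eq)
  then show "lam q r s m \<le> real (r + s) * real (cyclic_share n t i) - real r * real m"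
    unfolding lam_q by (simp add: mult_left_mono)
  have "real (cyclic_share n t i) \<le> of_int \<lceil>real t / real n\<rceil>"
    using cyclic_share_le_ceiling[OF assms(2), of t i] by (metis of_int_le_iff of_int_of_nat_eq)
  then show "real (r + s) * real (cyclic_share n t i) - real r * real m \<le> Lam q r s m"
    unfolding Lam_q by (simp add: mult_left_mono)
qed

lemma sum_two_valued:
  fixes g :: "'a \<Rightarrow> int"
  assumes "finite A" "\<forall>v\<in>A. g v \<in> {- int r, int s}"
  shows "(\<Sum>v\<in>A. g v) = int (r + s) * int (card {v\<in>A. g v = int s}) - int r * int (card A)"
proof -
  have "(\<Sum>v\<in>A. g v) = (\<Sum>v\<in>A. int (r + s) * (if g v = int s then 1 else 0) - int r)"
    using assms(2) by (intro sum.cong) auto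
  also have "\<dots> = int (r + s) * int (card {v\<in>A. g v = int s}) - int r * int (card A)"
    using assms(1) by (simp add: sum_subtractf sum_distrib_left[symmetric] sum.If_cases Int_def)
  finally show ?thesis .
qed

lemma card_H_verts_filter:
  "card {v \<in> H_verts n m. P v} = (\<Sum>l<m. card {a\<in>{..<n}. P (l, a)})"
proof -
  have "{v \<in> H_verts n m. P v} = Sigma {..<m} (\<lambda>l. {a\<in>{..<n}. P (l, a)})"
    by (auto simp: H_verts_def)
  then show ?thesis by (simp add: card_SigmaI)
qed

lemma sum_H_verts_two_valued:
  fixes f :: "nat \<times> nat \<Rightarrow> int"
  assumes "\<forall>v \<in> H_verts n m. f v \<in> {- int r, int s}"
  shows "(\<Sum>v \<in> H_verts n m. f v)
         = int (r + s) * int (\<Sum>l<m. card {a\<in>{..<n}. f (l, a) = int s}) - int r * int (n * m)"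
  using sum_two_valued[OF _ assms] card_H_verts_filter[of n m "\<lambda>v. f v = int s"]
  by (simp add: H_verts_def mult.commute)

definition layer_path :: "nat \<Rightarrow> (nat \<Rightarrow> nat \<Rightarrow> nat) \<Rightarrow> nat \<Rightarrow> (nat \<times> nat) list" where
  "layer_path m \<sigma> i = map (\<lambda>l. (l, \<sigma> l i)) [0..<m]"

lemma set_layer_path: "set (layer_path m \<sigma> i) = (\<lambda>l. (l, \<sigma> l i)) ` {..<m}"
  by (auto simp: layer_path_def)

lemma sum_layer_path: "(\<Sum>v \<in> set (layer_path m \<sigma> i). g v) = (\<Sum>l<m. g (l, \<sigma> l i))"
  unfolding set_layer_path by (subst sum.reindex) (auto simp: inj_on_def)

lemma is_dipath_layer_path:
  assumes "\<forall>l<m. \<sigma> l i < n"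
  shows "is_dipath (H_verts n m) (H_arc n m) m (layer_path m \<sigma> i)"
proof -
  have sub: "set (layer_path m \<sigma> i) \<subseteq> H_verts n m"
    using assms by (auto simp: set_layer_path H_verts_def)
  have "H_arc n m (layer_path m \<sigma> i ! j) (layer_path m \<sigma> i ! Suc j)"
    if "Suc j < m" for j
    using that sub nth_mem[of j "layer_path m \<sigma> i"] nth_mem[of "Suc j" "layer_path m \<sigma> i"]
    by (auto simp: H_arc_def layer_path_def)
  then show ?thesis
    using sub unfolding is_dipath_def by (simp add: layer_path_def distinct_map inj_on_def)
qed

lemma layer_paths_disjoint:
  assumes "\<forall>l<m. inj_on (\<sigma> l) {..<n}" "i < n" "j < n" "i \<noteq> j"
  shows "set (layer_path m \<sigma> i) \<inter> set (layer_path m \<sigma> j) = {}"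
  using assms by (auto simp: set_layer_path inj_on_def)

lemma layer_paths_cover:
  assumes "\<forall>l<m. bij_betw (\<sigma> l) {..<n} {..<n}"
  shows "(\<Union>i<n. set (layer_path m \<sigma> i)) = H_verts n m"
proof -
  have "(l, a) \<in> (\<Union>i<n. set (layer_path m \<sigma> i)) \<longleftrightarrow> l < m \<and> a < n" for l a
    using assms by (auto simp: set_layer_path bij_betw_def image_iff)
  then show ?thesis by (simp add: set_eq_iff split_paired_All H_verts_def)
qed

definition front_enum :: "nat \<Rightarrow> nat set \<Rightarrow> nat list" where
  "front_enum n S = sorted_list_of_set S @ sorted_list_of_set ({..<n} - S)"

lemma
  assumes "S \<subseteq> {..<n}"
  shows distinct_front_enum: "distinct (front_enum n S)"
    and set_front_enum: "set (front_enum n S) = {..<n}"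
    and length_front_enum: "length (front_enum n S) = n"
proof -
  have "finite S" using assms finite_subset by blast
  then show "distinct (front_enum n S)" "set (front_enum n S) = {..<n}"
    using assms by (auto simp: front_enum_def)
  then show "length (front_enum n S) = n"
    using distinct_card by fastforce
qed

lemma bij_betw_front_enum:
  assumes "S \<subseteq> {..<n}"
  shows "bij_betw ((!) (front_enum n S)) {..<n} {..<n}"
  using assms by (intro bij_betw_nth) (simp_all add: distinct_front_enum set_front_enum length_front_enum)

lemma front_enum_nth_in_iff:
  assumes "S \<subseteq> {..<n}" "j < n"
  shows "front_enum n S ! j \<in> S \<longleftrightarrow> j < card S"
proof -
  have fin: "finite S" using assms finite_subset by blast
  define C where "C = sorted_list_of_set ({..<n} - S)"
  have "front_enum n S ! j \<in> S" if "j < card S"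
    using that fin nth_mem[of j "sorted_list_of_set S"] by (simp add: front_enum_def nth_append)
  moreover have "front_enum n S ! j \<notin> S" if "\<not> j < card S"
  proof -
    have "j - card S < length C"
      using that assms length_front_enum[OF assms(1)] by (simp add: front_enum_def C_def)
    then have "C ! (j - card S) \<in> {..<n} - S"
      using nth_mem[of "j - card S" C] by (simp add: C_def)
    then show ?thesis
      using that fin by (simp add: front_enum_def nth_append C_def)
  qed
  ultimately show ?thesis by blast
qed

text \<open>Path \<open>i\<close> takes the vertex \<open>round_robin_perm n S l i\<close> of layer \<open>l\<close>; the
  members of \<open>S l\<close> are listed first and are the tokens \<open>\<Sum>j<l. card (S j), \<dots>\<close>.\<close>

definition round_robin_perm :: "nat \<Rightarrow> (nat \<Rightarrow> nat set) \<Rightarrow> nat \<Rightarrow> nat \<Rightarrow> nat" where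
  "round_robin_perm n S l = (!) (front_enum n (S l)) \<circ> cyclic_offset n (\<Sum>j<l. card (S j))"

lemma bij_betw_round_robin_perm:
  assumes "n > 0" "S l \<subseteq> {..<n}"
  shows "bij_betw (round_robin_perm n S l) {..<n} {..<n}"
  unfolding round_robin_perm_def
  using bij_betw_cyclic_offset[OF assms(1)] bij_betw_front_enum[OF assms(2)] by (rule bij_betw_trans)

lemma card_round_robin_perm_hits:
  assumes "\<forall>l<m. S l \<subseteq> {..<n}" "i < n"
  shows "card {l\<in>{..<m}. round_robin_perm n S l i \<in> S l} = cyclic_share n (\<Sum>l<m. card (S l)) i"
proof -
  have hit: "round_robin_perm n S l i \<in> S l \<longleftrightarrow> cyclic_offset n (\<Sum>j<l. card (S j)) i < card (S l)"
    if "l < m" for l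
    using front_enum_nth_in_iff[of "S l" n] assms that
      bij_betwE[OF bij_betw_cyclic_offset[of n "\<Sum>j<l. card (S j)"]]
    by (simp add: round_robin_perm_def)
  have "card {l\<in>{..<m}. round_robin_perm n S l i \<in> S l}
        = (\<Sum>l<m. if round_robin_perm n S l i \<in> S l then 1 else 0)"
    by (simp add: sum.If_cases Int_def)
  also have "\<dots> = (\<Sum>l<m. if cyclic_offset n (\<Sum>j<l. card (S j)) i < card (S l) then 1 else 0)"
    using hit by (intro sum.cong) auto
  also have "\<dots> = cyclic_share n (\<Sum>l<m. card (S l)) i"
    using assms by (intro sum_cyclic_offset_indicator) (auto intro: card_mono[where B = "{..<n}", simplified])
  finally show ?thesis .
qed

lemma sum_round_robin_layer_path:
  fixes f :: "nat \<times> nat \<Rightarrow> int"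
  assumes "\<forall>v \<in> H_verts n m. f v \<in> {- int r, int s}" "i < n"
  defines "S \<equiv> \<lambda>l. {a\<in>{..<n}. f (l, a) = int s}"
  shows "(\<Sum>v \<in> set (layer_path m (round_robin_perm n S) i). f v)
         = int (r + s) * int (cyclic_share n (\<Sum>l<m. card (S l)) i) - int r * int m"
proof -
  have S_sub: "\<forall>l<m. S l \<subseteq> {..<n}" by (auto simp: S_def)
  have "round_robin_perm n S l i < n" if "l < m" for l
    using bij_betw_round_robin_perm[of n S l] S_sub that assms(2) by (auto dest: bij_betwE)
  then have "{l\<in>{..<m}. f (l, round_robin_perm n S l i) = int s}
             = {l\<in>{..<m}. round_robin_perm n S l i \<in> S l}"
    by (auto simp: S_def)
  then show ?thesis
    using sum_two_valued[of "{..<m}" "\<lambda>l. f (l, round_robin_perm n S l i)" r s] assms(1)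
      card_round_robin_perm_hits[OF S_sub assms(2)] \<open>\<And>l. l < m \<Longrightarrow> round_robin_perm n S l i < n\<close>
    by (simp add: sum_layer_path H_verts_def)
qed

theorem theorem4p3:
  fixes r s m n :: nat and f :: "nat \<times> nat \<Rightarrow> int"
  assumes "r > 0" "s > 0" "m > 0" "n > 0"
    and "\<forall>v \<in> H_verts n m. f v \<in> {- int r, int s}"
  defines "q \<equiv> (1 / real n) * real_of_int (\<Sum>v \<in> H_verts n m. f v)"
  shows "\<exists>P :: nat \<Rightarrow> (nat \<times> nat) list.
     (\<forall>i<n. is_dipath (H_verts n m) (H_arc n m) m (P i)) \<and>
     (\<forall>i<n. \<forall>j<n. i \<noteq> j \<longrightarrow> set (P i) \<inter> set (P j) = {}) \<and>
     (\<Union>i<n. set (P i)) = H_verts n m \<and>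
     (\<forall>i<n. lam q r s m \<le> real_of_int (\<Sum>v \<in> set (P i). f v) \<and>
            real_of_int (\<Sum>v \<in> set (P i). f v) \<le> Lam q r s m)"
proof -
  define S where "S = (\<lambda>l. {a\<in>{..<n}. f (l, a) = int s})"
  define t where "t = (\<Sum>l<m. card (S l))"
  define \<sigma> where "\<sigma> = round_robin_perm n S"
  have bij: "\<forall>l<m. bij_betw (\<sigma> l) {..<n} {..<n}"
    unfolding \<sigma>_def by (auto intro!: bij_betw_round_robin_perm[OF assms(4)] simp: S_def)
  have "card (S l) \<le> n" for l
    using card_mono[of "{..<n}" "S l"] unfolding S_def by auto
  then have "t \<le> n * m"
    using sum_bounded_above[of "{..<m}" "\<lambda>l. card (S l)" n] by (simp add: t_def mult.commute)
  moreover have "q = real (r + s) * (real t / real n) - real r * real m"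
    using assms(4) unfolding q_def sum_H_verts_two_valued[OF assms(5)] t_def S_def
    by (simp add: field_simps)
  moreover have "real_of_int (\<Sum>v \<in> set (layer_path m \<sigma> i). f v)
      = real (r + s) * real (cyclic_share n t i) - real r * real m" if "i < n" for i
    using sum_round_robin_layer_path[OF assms(5) that] by (simp add: \<sigma>_def t_def S_def)
  ultimately have bounds: "\<forall>i<n. lam q r s m \<le> real_of_int (\<Sum>v \<in> set (layer_path m \<sigma> i). f v) \<and>
      real_of_int (\<Sum>v \<in> set (layer_path m \<sigma> i). f v) \<le> Lam q r s m"
    using cyclic_share_weight_bounds[of r s n t m] assms(1,4) by simp
  have "\<forall>i<n. is_dipath (H_verts n m) (H_arc n m) m (layer_path m \<sigma> i)"
    using bij by (auto intro!: is_dipath_layer_path dest: bij_betwE)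
  moreover have "\<forall>i<n. \<forall>j<n. i \<noteq> j \<longrightarrow> set (layer_path m \<sigma> i) \<inter> set (layer_path m \<sigma> j) = {}"
    using bij layer_paths_disjoint[of m \<sigma> n] by (simp add: bij_betw_def)
  ultimately show ?thesis
    using layer_paths_cover[OF bij] bounds by blast
qed

end
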